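(* Consider any run of Algorithm 1 (described in the context) under the standing assumption. The number of successful iterations performed before an $(\epsilon_g,\epsilon_H)$-stationary point is reached satisfies \[ |\mathcal{S}|\ \le\ \Big\lfloor \mathcal{C}_{\mathcal S}\max\{\epsilon_H^{-1},\ \epsilon_g^{-2}\epsilon_H,\ \epsilon_H^{-3}\}\Big\rfloor+1, \qquad \mathcal{C}_{\mathcal S}:=\tfrac{4(f_0-f_{\rm low})}{\eta}\max\Big\{\tfrac{1}{\delta_0^2},\ \tfrac{L_H^2}{9\gamma_1^2(1-\eta)^2},\ 1+2L_H\Big\}. \]
   Context: Let $f:\mathbb{R}^n\to\mathbb{R}$ with gradient $g=\nabla f$ and Hessian $H=\nabla^2 f$; $\|\cdot\|$ is the Euclidean norm and $\lambda_{\min}(\cdot)$ the smallest eigenvalue of a symmetric matrix. A point $x$ is $(\epsilon_g,\epsilon_H)$-stationary if $\|g(x)\|\le\epsilon_g$ and $\lambda_{\min}(H(x))\ge-\epsilon_H$. Write $f_k=f(x_k)$, $g_k=g(x_k)$, $H_k=H(x_k)$ and $m_k(x):=f_k+g_k^T(x-x_k)+\tfrac12(x-x_k)^TH_k(x-x_k)$. Algorithm 1 (exact trust-region Newton method). Inputs: tolerances $\epsilon_g,\epsilon_H>0$; parameters $\gamma_1\in(0,1)$, $\gamma_2\in[1,\infty)$, $\psi\in(1/\gamma_2,1]$; $x_0\in\mathbb{R}^n$; $\delta_0>0$; $\delta_{\max}\ge\delta_0$; $\eta\in(0,1)$. For $k=0,1,2,\dots$: evaluate $g_k,H_k$; if $\|g_k\|\le\epsilon_g$,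 compute $\lambda_k=\lambda_{\min}(H_k)$ and, if $\lambda_k\ge-\epsilon_H$, return $x_k$ (terminate). Otherwise compute $s_k$ as a global solution of $\min_{s}\ m_k(x_k+s)+\tfrac12\epsilon_H\|s\|^2$ subject to $\|s\|\le\delta_k$. Set $\rho_k=\frac{f_k-f(x_k+s_k)}{m_k(x_k)-m_k(x_k+s_k)}$. If $\rho_k\ge\eta$: $x_{k+1}=x_k+s_k$, and $\delta_{k+1}=\min\{\gamma_2\delta_k,\delta_{\max}\}$ if $\|s_k\|\ge\psi\delta_k$, else $\delta_{k+1}=\delta_k$. If $\rho_k<\eta$: $x_{k+1}=x_k$ and $\delta_{k+1}=\gamma_1\|s_k\|$. $\mathcal{K}$ is the set of indices $k$ such that iteration $k$ is completed without termination; $\mathcal{S}=\{k\in\mathcal{K}:\rho_k\ge\eta\}$ (successful iterations). Standing assumption: the sequence $\{f_k\}$ is bounded below by some $f_{\rm low}\in\mathbb{R}$, and all segments $[x_k,x_k+s_k]$ lie in an open set on which $f$ is twice continuously differentiable with gradient Lipschitz continuous with constant $L_g>0$ and Hessian Lipschitz continuous with constant $L_H>0$. *)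

theory Defs
  imports "HOL-Analysis.Analysis"
begin

definition lambda_min :: "real^'n^'n \<Rightarrow> real" where
  "lambda_min A = Min {l. \<exists>v. v \<noteq> 0 \<and> A *v v = l *\<^sub>R v}"

definition tr_model ::
  "(real^'n \<Rightarrow> real) \<Rightarrow> (real^'n \<Rightarrow> real^'n) \<Rightarrow> (real^'n \<Rightarrow> real^'n^'n)
     \<Rightarrow> real^'n \<Rightarrow> real^'n \<Rightarrow> real" where
  "tr_model f g H x y = f x + g x \<bullet> (y - x) + (1/2) * ((y - x) \<bullet> (H x *v (y - x)))"

definition stationary ::
  "(real^'n \<Rightarrow> real^'n) \<Rightarrow> (real^'n \<Rightarrow> real^'n^'n) \<Rightarrow> real \<Rightarrow> real \<Rightarrow> real^'n \<Rightarrow> bool" where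
  "stationary g H eg eH x \<longleftrightarrow> norm (g x) \<le> eg \<and> lambda_min (H x) \<ge> - eH"

end

theory Submission
  imports Defs
begin

(* Since the trial step minimises the eH-regularised model, every successful step decreases f
   by at least eta eH |s|^2 / 2.  Call a successful step large if that decrease is at least
   eta / (2 C M), with C and M the two maxima of the bound.  Boundary steps are large: short
   steps are always successful (the cubic Taylor error is small), so the radius of a successful
   iteration is at least min delta0 (3 gamma1 (1 - eta) eH / LH).  Interior steps after which
   the gradient exceeds eg are large, because the optimality conditions and the Lipschitz
   Hessian bound the new gradient by LH |s|^2 / 2 + eH |s|.  Any other successful step k is
   interior, so H(x k) + eH I is positive semidefinite, and the gradient at x (k + 1) is small;
   since x (k + 1) is not stationary, the next successful step starts there and must hit the
   boundary, hence is large.  So at most one more than twice the number of large steps are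
   successful, and telescoping f bounds the number of large steps. *)

lemma zero_if_abs_le_linear_at_right:
  fixes d c :: real
  assumes "eventually (\<lambda>t. \<bar>d\<bar> \<le> c * t) (at_right 0)"
  shows "d = 0"
proof -
  have "((\<lambda>t. c * t) \<longlongrightarrow> 0) (at_right (0::real))"
    by (auto intro!: tendsto_eq_intros)
  from tendsto_lowerbound[OF this assms] show ?thesis by simp
qed

lemma linear_coeff_zero_if_quadratic_nonneg:
  fixes a b e :: real
  assumes "0 < e" and nonneg: "\<And>\<tau>. \<bar>\<tau>\<bar> \<le> e \<Longrightarrow> 0 \<le> a * \<tau> + b * \<tau>\<^sup>2"
  shows "a = 0"
proof (rule zero_if_abs_le_linear_at_right)
  have "\<bar>a\<bar> \<le> b * t" if "0 < t" "t < e" for t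
  proof -
    have "0 \<le> a * t + b * t\<^sup>2" "0 \<le> - a * t + b * t\<^sup>2"
      using nonneg[of t] nonneg[of "- t"] that by auto
    then have "a * t \<le> (b * t) * t" "- a * t \<le> (b * t) * t"
      by (auto simp: power2_eq_square algebra_simps)
    with \<open>0 < t\<close> show ?thesis
      by (metis abs_le_iff mult_le_cancel_right_pos)
  qed
  then show "eventually (\<lambda>t. \<bar>a\<bar> \<le> b * t) (at_right 0)"
    using \<open>0 < e\<close> unfolding eventually_at_right_field by blast
qed

lemma DERIV_power_bound_imp_abs_le:
  fixes \<phi> \<phi>' :: "real \<Rightarrow> real"
  assumes "0 \<le> T" and "\<phi> 0 = 0"
    and deriv: "\<And>t. 0 \<le> t \<Longrightarrow> t \<le> T \<Longrightarrow> (\<phi> has_real_derivative \<phi>' t) (at t)"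
    and bound: "\<And>t. 0 \<le> t \<Longrightarrow> t \<le> T \<Longrightarrow> \<bar>\<phi>' t\<bar> \<le> c * t ^ m"
  shows "\<bar>\<phi> T\<bar> \<le> c * T ^ Suc m / Suc m"
proof -
  let ?p = "\<lambda>t. c * t ^ Suc m / Suc m"
  have p_deriv: "(?p has_real_derivative c * t ^ m) (at t)" for t
  proof -
    have "((\<lambda>t. t ^ Suc m) has_real_derivative Suc m * t ^ m) (at t)"
      using DERIV_pow[of "Suc m" t] by simp
    from DERIV_cdivide[OF DERIV_cmult[OF this, of c], of "Suc m"] show ?thesis
      by simp
  qed
  have "\<phi> T - ?p T \<le> \<phi> 0 - ?p 0"
    using \<open>0 \<le> T\<close> DERIV_diff[OF deriv p_deriv] bound
    by (intro DERIV_nonpos_imp_nonincreasing[where f = "\<lambda>t. \<phi> t - ?p t"]) force+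
  moreover have "\<phi> 0 + ?p 0 \<le> \<phi> T + ?p T"
    using \<open>0 \<le> T\<close> DERIV_add[OF deriv p_deriv] bound
    by (intro DERIV_nonneg_imp_nondecreasing[where f = "\<lambda>t. \<phi> t + ?p t"]) force+
  ultimately show ?thesis
    using \<open>\<phi> 0 = 0\<close> by auto
qed

lemma add_scaleR_in_closed_segment:
  "0 \<le> t \<Longrightarrow> t \<le> 1 \<Longrightarrow> x + t *\<^sub>R s \<in> closed_segment x (x + s)"
  unfolding in_segment by (auto intro!: exI[of _ t] simp: algebra_simps)

lemma closed_segment_initial_subset:
  "0 \<le> t \<Longrightarrow> t \<le> 1 \<Longrightarrow> closed_segment x (x + t *\<^sub>R s) \<subseteq> closed_segment x (x + s)"
  by (simp add: add_scaleR_in_closed_segment closed_segment_subset)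

section \<open>Taylor estimates under a Lipschitz Hessian\<close>

locale lipschitz_hessian =
  fixes f :: "real^'n \<Rightarrow> real" and g :: "real^'n \<Rightarrow> real^'n"
    and H :: "real^'n \<Rightarrow> real^'n^'n" and U :: "(real^'n) set" and LH :: real
  assumes f_deriv: "\<And>y. y \<in> U \<Longrightarrow> (f has_derivative (\<lambda>h. g y \<bullet> h)) (at y)"
    and g_deriv: "\<And>y. y \<in> U \<Longrightarrow> (g has_derivative (\<lambda>h. H y *v h)) (at y)"
    and H_lip: "\<And>y z. y \<in> U \<Longrightarrow> z \<in> U \<Longrightarrow> onorm (\<lambda>v. (H y - H z) *v v) \<le> LH * norm (y - z)"
    and LH_nonneg: "0 \<le> LH"
begin

lemma norm_hessian_diff_le:
  assumes "y \<in> U" "z \<in> U"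
  shows "norm ((H y - H z) *v v) \<le> LH * norm (y - z) * norm v"
proof -
  have "norm ((H y - H z) *v v) \<le> onorm (\<lambda>v. (H y - H z) *v v) * norm v"
    by (rule onorm) simp
  also have "\<dots> \<le> LH * norm (y - z) * norm v"
    using H_lip[OF assms] by (simp add: mult_right_mono)
  finally show ?thesis .
qed

lemma f_line_deriv:
  assumes "p + a *\<^sub>R u \<in> U"
  shows "((\<lambda>a. f (p + a *\<^sub>R u)) has_real_derivative g (p + a *\<^sub>R u) \<bullet> u) (at a)"
proof -
  have "((\<lambda>t. p + t *\<^sub>R u) has_derivative (\<lambda>h. h *\<^sub>R u)) (at a)"
    by (auto intro!: derivative_eq_intros)
  from diff_chain_at[OF this f_deriv[OF assms]] show ?thesis
    unfolding has_field_derivative_def o_def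
    by (rule has_derivative_eq_rhs) (simp add: fun_eq_iff)
qed

lemma g_line_deriv:
  assumes "p + a *\<^sub>R u \<in> U"
  shows "((\<lambda>a. g (p + a *\<^sub>R u)) has_derivative (\<lambda>h. h *\<^sub>R (H (p + a *\<^sub>R u) *v u))) (at a)"
proof -
  have "((\<lambda>t. p + t *\<^sub>R u) has_derivative (\<lambda>h. h *\<^sub>R u)) (at a)"
    by (auto intro!: derivative_eq_intros)
  from diff_chain_at[OF this g_deriv[OF assms]] show ?thesis
    by (simp add: o_def matrix_vector_mult_scaleR)
qed

lemma gradient_remainder_bound:
  assumes seg: "closed_segment x (x + s) \<subseteq> U"
  shows "norm (g (x + s) - g x - H x *v s) \<le> LH / 2 * (norm s)\<^sup>2"
proof -
  define r where "r = g (x + s) - g x - H x *v s"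
  \<comment> \<open>the scalar estimate along the segment, tested against the remainder \<open>r\<close> itself\<close>
  have "\<bar>r \<bullet> (g (x + 1 *\<^sub>R s) - g x - 1 *\<^sub>R (H x *v s))\<bar> \<le> (LH * (norm s)\<^sup>2 * norm r) * 1 ^ Suc 1 / Suc 1"
  proof (rule DERIV_power_bound_imp_abs_le[where \<phi> = "\<lambda>t. r \<bullet> (g (x + t *\<^sub>R s) - g x - t *\<^sub>R (H x *v s))"])
    fix t :: real assume t: "0 \<le> t" "t \<le> 1"
    have xt: "x + t *\<^sub>R s \<in> U"
      using seg add_scaleR_in_closed_segment[OF t] by blast
    have "((\<lambda>t. r \<bullet> (g (x + t *\<^sub>R s) - g x - t *\<^sub>R (H x *v s))) has_derivative
        (\<lambda>h. r \<bullet> (h *\<^sub>R (H (x + t *\<^sub>R s) *v s) - h *\<^sub>R (H x *v s)))) (at t)"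
      by (auto intro!: derivative_eq_intros g_line_deriv[OF xt])
    then show "((\<lambda>t. r \<bullet> (g (x + t *\<^sub>R s) - g x - t *\<^sub>R (H x *v s))) has_real_derivative
        r \<bullet> ((H (x + t *\<^sub>R s) - H x) *v s)) (at t)"
      unfolding has_field_derivative_def
      by (rule has_derivative_eq_rhs)
        (auto simp: fun_eq_iff algebra_simps)
    have "\<bar>r \<bullet> ((H (x + t *\<^sub>R s) - H x) *v s)\<bar> \<le> norm r * (LH * norm (t *\<^sub>R s) * norm s)"
      using Cauchy_Schwarz_ineq2 mult_left_mono[OF norm_hessian_diff_le[OF xt, of x s]] seg
      by (smt (verit) add_diff_cancel_left' ends_in_segment(1) norm_ge_zero subsetD)
    then show "\<bar>r \<bullet> ((H (x + t *\<^sub>R s) - H x) *v s)\<bar> \<le> LH * (norm s)\<^sup>2 * norm r * t ^ 1"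
      using t by (simp add: power2_eq_square mult_ac)
  qed simp_all
  then have "norm r * norm r \<le> (LH / 2 * (norm s)\<^sup>2) * norm r"
    by (simp add: r_def power2_norm_eq_inner[symmetric] power2_eq_square)
  then show ?thesis
    using LH_nonneg by (cases "r = 0") (auto simp: r_def)
qed

lemma model_remainder_bound:
  assumes seg: "closed_segment x (x + s) \<subseteq> U"
  shows "\<bar>f (x + s) - tr_model f g H x (x + s)\<bar> \<le> LH * norm s ^ 3 / 6"
proof -
  have "\<bar>f (x + 1 *\<^sub>R s) - f x - 1 * (g x \<bullet> s) - 1\<^sup>2 / 2 * (s \<bullet> (H x *v s))\<bar>
      \<le> (LH / 2 * norm s ^ 3) * 1 ^ Suc 2 / Suc 2"
  proof (rule DERIV_power_bound_imp_abs_le[where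
        \<phi> = "\<lambda>t. f (x + t *\<^sub>R s) - f x - t * (g x \<bullet> s) - t\<^sup>2 / 2 * (s \<bullet> (H x *v s))"])
    fix t :: real assume t: "0 \<le> t" "t \<le> 1"
    have xt: "x + t *\<^sub>R s \<in> U"
      using seg add_scaleR_in_closed_segment[OF t] by blast
    have "((\<lambda>t. f (x + t *\<^sub>R s) - f x - t * (g x \<bullet> s) - t\<^sup>2 / 2 * (s \<bullet> (H x *v s)))
        has_derivative (\<lambda>h. h * (g (x + t *\<^sub>R s) \<bullet> s) - h * (g x \<bullet> s) - (2 * t * h) / 2 * (s \<bullet> (H x *v s)))) (at t)"
      using f_line_deriv[OF xt] unfolding has_field_derivative_def
      by (auto intro!: derivative_eq_intros simp: power2_eq_square algebra_simps)
    then show "((\<lambda>t. f (x + t *\<^sub>R s) - f x - t * (g x \<bullet> s) - t\<^sup>2 / 2 * (s \<bullet> (H x *v s)))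
        has_real_derivative s \<bullet> (g (x + t *\<^sub>R s) - g x - H x *v (t *\<^sub>R s))) (at t)"
      unfolding has_field_derivative_def
      by (rule has_derivative_eq_rhs)
        (auto simp: fun_eq_iff algebra_simps inner_commute)
    have rem: "norm (g (x + t *\<^sub>R s) - g x - H x *v (t *\<^sub>R s)) \<le> LH / 2 * (norm (t *\<^sub>R s))\<^sup>2"
      using closed_segment_initial_subset[OF t] seg by (intro gradient_remainder_bound) blast
    have "\<bar>s \<bullet> (g (x + t *\<^sub>R s) - g x - H x *v (t *\<^sub>R s))\<bar>
        \<le> norm s * norm (g (x + t *\<^sub>R s) - g x - H x *v (t *\<^sub>R s))"
      by (rule Cauchy_Schwarz_ineq2)
    also have "\<dots> \<le> norm s * (LH / 2 * (norm (t *\<^sub>R s))\<^sup>2)"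
      by (rule mult_left_mono[OF rem]) simp
    also have "\<dots> = LH / 2 * norm s ^ 3 * t ^ 2"
      using t by (simp add: power2_eq_square power3_eq_cube)
    finally show "\<bar>s \<bullet> (g (x + t *\<^sub>R s) - g x - H x *v (t *\<^sub>R s))\<bar> \<le> LH / 2 * norm s ^ 3 * t ^ 2" .
  qed simp_all
  then show ?thesis
    unfolding tr_model_def by (simp add: inner_commute algebra_simps)
qed

lemma second_difference_estimate:
  assumes "0 \<le> t" and ball: "cball y (t * (norm u + norm v)) \<subseteq> U"
  shows "\<bar>f (y + t *\<^sub>R v + t *\<^sub>R u) - f (y + t *\<^sub>R u) - f (y + t *\<^sub>R v) + f y - t\<^sup>2 * (u \<bullet> (H y *v v))\<bar>
    \<le> LH * ((norm u)\<^sup>2 * norm v + norm u * (norm v)\<^sup>2 / 2) * t ^ 3"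
proof -
  define C where "C = LH * ((norm u)\<^sup>2 * norm v + norm u * (norm v)\<^sup>2 / 2)"
  have grid: "y + b *\<^sub>R v + a *\<^sub>R u \<in> cball y (t * (norm u + norm v))"
    if "0 \<le> a" "a \<le> t" "0 \<le> b" "b \<le> t" for a b
  proof -
    have "norm (b *\<^sub>R v + a *\<^sub>R u) \<le> b * norm v + a * norm u"
      using that norm_triangle_ineq[of "b *\<^sub>R v" "a *\<^sub>R u"] by simp
    also have "\<dots> \<le> t * (norm u + norm v)"
      using that mult_right_mono[of a t "norm u"] mult_right_mono[of b t "norm v"]
      by (simp add: distrib_left)
    finally show ?thesis
      by (metis add.assoc add_diff_cancel_left' dist_commute dist_norm mem_cball)
  qed
  have "\<bar>f (y + t *\<^sub>R v + t *\<^sub>R u) - f (y + t *\<^sub>R u) - f (y + t *\<^sub>R v) + f y - t * (t * (u \<bullet> (H y *v v)))\<bar>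
      \<le> (C * t\<^sup>2) * t ^ Suc 0 / Suc 0"
  proof (rule DERIV_power_bound_imp_abs_le[where
        \<phi> = "\<lambda>a. f (y + t *\<^sub>R v + a *\<^sub>R u) - f (y + a *\<^sub>R u) - f (y + t *\<^sub>R v) + f y - a * (t * (u \<bullet> (H y *v v)))"])
    fix a assume a: "0 \<le> a" "a \<le> t"
    define z where "z = y + a *\<^sub>R u"
    have z_ball: "z \<in> cball y (t * (norm u + norm v))" and zt_ball: "z + t *\<^sub>R v \<in> cball y (t * (norm u + norm v))"
      using grid[OF a, of 0] grid[OF a, of t] \<open>0 \<le> t\<close> by (simp_all add: z_def algebra_simps)
    then have zU: "z \<in> U" and ztU: "y + t *\<^sub>R v + a *\<^sub>R u \<in> U"
      using ball by (auto simp: z_def algebra_simps)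
    show "((\<lambda>a. f (y + t *\<^sub>R v + a *\<^sub>R u) - f (y + a *\<^sub>R u) - f (y + t *\<^sub>R v) + f y - a * (t * (u \<bullet> (H y *v v))))
        has_real_derivative g (z + t *\<^sub>R v) \<bullet> u - g z \<bullet> u - t * (u \<bullet> (H y *v v))) (at a)"
      using f_line_deriv[OF ztU] f_line_deriv[of y a u] zU
      by (auto intro!: derivative_eq_intros simp: z_def algebra_simps)
    have "closed_segment z (z + t *\<^sub>R v) \<subseteq> U"
      using closed_segment_subset[OF z_ball zt_ball convex_cball] ball by blast
    then have taylor: "norm (g (z + t *\<^sub>R v) - g z - H z *v (t *\<^sub>R v)) \<le> LH / 2 * (norm (t *\<^sub>R v))\<^sup>2"
      by (rule gradient_remainder_bound)
    have lip: "norm ((H z - H y) *v (t *\<^sub>R v)) \<le> LH * (a * norm u) * (t * norm v)"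
      using norm_hessian_diff_le[OF zU, of y "t *\<^sub>R v"] ball a \<open>0 \<le> t\<close>
      by (auto simp: z_def subset_iff)
    have "g (z + t *\<^sub>R v) \<bullet> u - g z \<bullet> u - t * (u \<bullet> (H y *v v))
        = u \<bullet> (g (z + t *\<^sub>R v) - g z - H z *v (t *\<^sub>R v)) + u \<bullet> ((H z - H y) *v (t *\<^sub>R v))"
      by (simp add: algebra_simps inner_commute)
    also have "\<bar>\<dots>\<bar> \<le> norm u * (LH / 2 * (norm (t *\<^sub>R v))\<^sup>2) + norm u * (LH * (a * norm u) * (t * norm v))"
      using Cauchy_Schwarz_ineq2 mult_left_mono[OF taylor, of "norm u"] mult_left_mono[OF lip, of "norm u"]
      by (smt (verit) norm_ge_zero)
    also have "\<dots> \<le> C * t\<^sup>2 * a ^ 0"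
      using a LH_nonneg
      by (simp add: C_def power2_eq_square algebra_simps mult_left_mono mult_right_mono)
    finally show "\<bar>g (z + t *\<^sub>R v) \<bullet> u - g z \<bullet> u - t * (u \<bullet> (H y *v v))\<bar> \<le> C * t\<^sup>2 * a ^ 0" .
  qed (use \<open>0 \<le> t\<close> in simp_all)
  then show ?thesis
    by (simp add: C_def power2_eq_square power3_eq_cube mult_ac)
qed

text \<open>\<open>H\<close> is not assumed symmetric, but it is: the second difference of \<open>f\<close> in the directions
  \<open>u\<close> and \<open>v\<close> is symmetric in \<open>u\<close> and \<open>v\<close> and equals \<open>t\<^sup>2 u \<bullet> (H y *v v)\<close> up to \<open>O(t\<^sup>3)\<close>.\<close>
lemma hessian_symmetric:
  assumes "y \<in> interior U"
  shows "u \<bullet> (H y *v v) = v \<bullet> (H y *v u)"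
proof -
  obtain r where "0 < r" "cball y r \<subseteq> U"
    using assms mem_interior_cball by blast
  define Cu Cv where "Cu = LH * ((norm u)\<^sup>2 * norm v + norm u * (norm v)\<^sup>2 / 2)"
    and "Cv = LH * ((norm v)\<^sup>2 * norm u + norm v * (norm u)\<^sup>2 / 2)"
  have "\<bar>u \<bullet> (H y *v v) - v \<bullet> (H y *v u)\<bar> \<le> (Cu + Cv) * t"
    if t: "0 < t" "t < r / (norm u + norm v + 1)" for t
  proof -
    have "t * (norm u + norm v) \<le> t * (norm u + norm v + 1)"
      using t by simp
    also have "\<dots> < r"
      using t by (simp add: pos_less_divide_eq add_nonneg_pos)
    finally have "cball y (t * (norm u + norm v)) \<subseteq> U"
      using \<open>cball y r \<subseteq> U\<close> subset_cball[of "t * (norm u + norm v)" r y] by auto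
    then have "cball y (t * (norm v + norm u)) \<subseteq> U"
      by (simp add: add.commute)
    from second_difference_estimate[OF _ \<open>cball y (t * (norm u + norm v)) \<subseteq> U\<close>]
      second_difference_estimate[OF _ this] t
    have "\<bar>t\<^sup>2 * (u \<bullet> (H y *v v) - v \<bullet> (H y *v u))\<bar> \<le> ((Cu + Cv) * t) * t\<^sup>2"
      by (simp add: Cu_def Cv_def abs_le_iff power3_eq_cube power2_eq_square algebra_simps)
    with t show ?thesis
      by (simp add: abs_mult mult.commute)
  qed
  moreover have "0 < r / (norm u + norm v + 1)"
    using \<open>0 < r\<close> by (simp add: add_nonneg_pos)
  ultimately have "eventually (\<lambda>t. \<bar>u \<bullet> (H y *v v) - v \<bullet> (H y *v u)\<bar> \<le> (Cu + Cv) * t) (at_right 0)"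
    unfolding eventually_at_right_field by blast
  from zero_if_abs_le_linear_at_right[OF this] show ?thesis
    by simp
qed

end

section \<open>Symmetric matrices and the regularised subproblem\<close>

lemma symmetric_quadratic_form_add:
  fixes A :: "real^'n^'n"
  assumes symm: "\<And>u v. u \<bullet> (A *v v) = v \<bullet> (A *v u)"
  shows "(x + \<tau> *\<^sub>R w) \<bullet> (A *v (x + \<tau> *\<^sub>R w)) = x \<bullet> (A *v x) + 2 * \<tau> * (w \<bullet> (A *v x)) + \<tau>\<^sup>2 * (w \<bullet> (A *v w))"
  using symm[of x w]
  by (simp add: power2_eq_square algebra_simps)

lemma symmetric_eigenvalues_finite:
  fixes A :: "real^'n^'n"
  assumes symm: "\<And>u v. u \<bullet> (A *v v) = v \<bullet> (A *v u)"
  shows "finite {l. \<exists>v. v \<noteq> 0 \<and> A *v v = l *\<^sub>R v}"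
proof (rule ccontr)
  let ?E = "{l. \<exists>v. v \<noteq> 0 \<and> A *v v = l *\<^sub>R v}"
  assume "infinite ?E"
  then obtain F where F: "F \<subseteq> ?E" "finite F" "card F = Suc CARD('n)"
    using infinite_arbitrarily_large by blast
  define ev where "ev l = (SOME v. v \<noteq> 0 \<and> A *v v = l *\<^sub>R v)" for l
  have ev: "ev l \<noteq> 0 \<and> A *v ev l = l *\<^sub>R ev l" if "l \<in> F" for l
  proof -
    have "\<exists>v. v \<noteq> 0 \<and> A *v v = l *\<^sub>R v"
      using F(1) that by auto
    then show ?thesis
      unfolding ev_def by (rule someI_ex)
  qed
  have "inj_on ev F"
  proof (rule inj_onI)
    fix a b assume "a \<in> F" "b \<in> F" "ev a = ev b"
    then have "a *\<^sub>R ev a = b *\<^sub>R ev a"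
      using ev by metis
    then show "a = b"
      using ev \<open>a \<in> F\<close> by simp
  qed
  have "ev a \<bullet> ev b = 0" if "a \<in> F" "b \<in> F" "a \<noteq> b" for a b
  proof -
    have "a * (ev a \<bullet> ev b) = b * (ev a \<bullet> ev b)"
      using ev[OF \<open>a \<in> F\<close>] ev[OF \<open>b \<in> F\<close>] symm[of "ev a" "ev b"] by (auto simp: inner_commute)
    with \<open>a \<noteq> b\<close> show ?thesis
      by simp
  qed
  then have "independent (ev ` F)"
    using ev by (intro pairwise_orthogonal_independent) (auto simp: pairwise_def orthogonal_def)
  then have "card (ev ` F) \<le> CARD('n)"
    using independent_bound by fastforce
  with card_image[OF \<open>inj_on ev F\<close>] F(3) show False
    by simp
qed

lemma symmetric_eigenvector_exists:
  fixes A :: "real^'n^'n"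
  assumes symm: "\<And>u v. u \<bullet> (A *v v) = v \<bullet> (A *v u)"
  shows "\<exists>l v. v \<noteq> 0 \<and> A *v v = l *\<^sub>R v"
proof -
  let ?S = "sphere (0::real^'n) 1"
  have "?S \<noteq> {}"
    by (simp add: sphere_def) (metis norm_axis_1)
  moreover have "continuous_on ?S (\<lambda>v. v \<bullet> (A *v v))"
    by (intro continuous_intros)
  ultimately obtain v0 where v0: "v0 \<in> ?S" and min: "\<And>w. w \<in> ?S \<Longrightarrow> v0 \<bullet> (A *v v0) \<le> w \<bullet> (A *v w)"
    using continuous_attains_inf[OF compact_sphere] by blast
  define \<mu> where "\<mu> = v0 \<bullet> (A *v v0)"
  have v0_unit: "v0 \<bullet> v0 = 1"
    using v0 by (simp add: power2_norm_eq_inner[symmetric])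
  \<comment> \<open>the minimum of the Rayleigh quotient makes \<open>A - \<mu> I\<close> positive semidefinite\<close>
  have psd: "\<mu> * (w \<bullet> w) \<le> w \<bullet> (A *v w)" for w
  proof (cases "w = 0")
    case False
    define w' where "w' = (1 / norm w) *\<^sub>R w"
    have "\<mu> \<le> w' \<bullet> (A *v w')"
      using min[of w'] False by (simp add: \<mu>_def w'_def)
    then have "\<mu> * (norm w)\<^sup>2 \<le> (w' \<bullet> (A *v w')) * (norm w)\<^sup>2"
      by (simp add: mult_right_mono)
    also have "\<dots> = w \<bullet> (A *v w)"
      using False by (simp add: w'_def matrix_vector_mult_scaleR power2_eq_square)
    finally show ?thesis
      by (simp add: power2_norm_eq_inner)
  qed simp
  define z where "z = A *v v0 - \<mu> *\<^sub>R v0"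
  have "2 * (z \<bullet> z) = 0"
  proof (rule linear_coeff_zero_if_quadratic_nonneg[of 1])
    fix \<tau> :: real
    have "0 \<le> (v0 + \<tau> *\<^sub>R z) \<bullet> (A *v (v0 + \<tau> *\<^sub>R z)) - \<mu> * ((v0 + \<tau> *\<^sub>R z) \<bullet> (v0 + \<tau> *\<^sub>R z))"
      using psd[of "v0 + \<tau> *\<^sub>R z"] by simp
    also have "\<dots> = 2 * (z \<bullet> z) * \<tau> + (z \<bullet> (A *v z) - \<mu> * (z \<bullet> z)) * \<tau>\<^sup>2"
      unfolding symmetric_quadratic_form_add[OF symm]
      by (simp add: z_def \<mu>_def v0_unit inner_commute power2_eq_square algebra_simps)
    finally show "0 \<le> 2 * (z \<bullet> z) * \<tau> + (z \<bullet> (A *v z) - \<mu> * (z \<bullet> z)) * \<tau>\<^sup>2" .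
  qed simp
  then have "A *v v0 = \<mu> *\<^sub>R v0"
    by (simp add: z_def)
  moreover have "v0 \<noteq> 0"
    using v0 by auto
  ultimately show ?thesis
    by blast
qed

lemma lambda_min_ge_if_shifted_psd:
  fixes A :: "real^'n^'n"
  assumes symm: "\<And>u v. u \<bullet> (A *v v) = v \<bullet> (A *v u)"
    and psd: "\<And>v. 0 \<le> v \<bullet> (A *v v) + e * (v \<bullet> v)"
  shows "- e \<le> lambda_min A"
proof -
  let ?E = "{l. \<exists>v. v \<noteq> 0 \<and> A *v v = l *\<^sub>R v}"
  have "Min ?E \<in> ?E"
    using symmetric_eigenvalues_finite[OF symm] symmetric_eigenvector_exists[OF symm] by (intro Min_in) auto
  then obtain v where v: "v \<noteq> 0" "A *v v = Min ?E *\<^sub>R v"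
    by auto
  have "0 \<le> (Min ?E + e) * (v \<bullet> v)"
    using psd[of v] v(2) by (simp add: algebra_simps)
  moreover have "0 < v \<bullet> v"
    using v(1) by simp
  ultimately show ?thesis
    unfolding lambda_min_def by (simp add: zero_le_mult_iff)
qed

lemma interior_minimizer_optimality:
  fixes c s :: "real^'n" and A :: "real^'n^'n"
  assumes symm: "\<And>u v. u \<bullet> (A *v v) = v \<bullet> (A *v u)"
    and interior: "norm s < \<delta>"
    and opt: "\<And>t. norm t \<le> \<delta> \<Longrightarrow> c \<bullet> s + (s \<bullet> (A *v s)) / 2 + e / 2 * (norm s)\<^sup>2
                 \<le> c \<bullet> t + (t \<bullet> (A *v t)) / 2 + e / 2 * (norm t)\<^sup>2"
  shows "c + A *v s + e *\<^sub>R s = 0" and "0 \<le> w \<bullet> (A *v w) + e * (w \<bullet> w)"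
proof -
  define \<epsilon> where "\<epsilon> w = (\<delta> - norm s) / (norm w + 1)" for w :: "real^'n"
  have \<epsilon>_pos: "0 < \<epsilon> w" for w
    using interior by (simp add: \<epsilon>_def add_nonneg_pos)
  have expansion: "0 \<le> (w \<bullet> (c + A *v s + e *\<^sub>R s)) * \<tau> + ((w \<bullet> (A *v w) + e * (w \<bullet> w)) / 2) * \<tau>\<^sup>2"
    if "\<bar>\<tau>\<bar> \<le> \<epsilon> w" for w \<tau>
  proof -
    have "0 < norm w + 1"
      by (simp add: add_nonneg_pos)
    with that have "\<bar>\<tau>\<bar> * (norm w + 1) \<le> \<delta> - norm s"
      by (simp add: \<epsilon>_def pos_le_divide_eq)
    then have "\<bar>\<tau>\<bar> * norm w \<le> \<delta> - norm s"
      using abs_ge_zero[of \<tau>] by (simp add: distrib_left)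
    then have "norm (s + \<tau> *\<^sub>R w) \<le> \<delta>"
      using norm_triangle_ineq[of s "\<tau> *\<^sub>R w"] by simp
    moreover have "c \<bullet> (s + \<tau> *\<^sub>R w) + ((s + \<tau> *\<^sub>R w) \<bullet> (A *v (s + \<tau> *\<^sub>R w))) / 2 + e / 2 * (norm (s + \<tau> *\<^sub>R w))\<^sup>2
        = c \<bullet> s + (s \<bullet> (A *v s)) / 2 + e / 2 * (norm s)\<^sup>2
          + ((w \<bullet> (c + A *v s + e *\<^sub>R s)) * \<tau> + ((w \<bullet> (A *v w) + e * (w \<bullet> w)) / 2) * \<tau>\<^sup>2)"
      unfolding power2_norm_eq_inner symmetric_quadratic_form_add[OF symm]
      by (simp add: inner_commute power2_eq_square algebra_simps) (simp add: field_simps)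
    ultimately show ?thesis
      using opt by fastforce
  qed
  define r where "r = c + A *v s + e *\<^sub>R s"
  have "r \<bullet> r = 0"
    using linear_coeff_zero_if_quadratic_nonneg[OF \<epsilon>_pos expansion[where w = r]] by (simp add: r_def)
  then show first_order: "c + A *v s + e *\<^sub>R s = 0"
    by (simp add: r_def)
  have "0 \<le> ((w \<bullet> (A *v w) + e * (w \<bullet> w)) / 2) * (\<epsilon> w)\<^sup>2"
    using expansion[of "\<epsilon> w" w] \<epsilon>_pos[of w] first_order by simp
  then show "0 \<le> w \<bullet> (A *v w) + e * (w \<bullet> w)"
    using \<epsilon>_pos[of w] by (simp add: zero_le_mult_iff)
qed

definition radius_curvature_const :: "real \<Rightarrow> real \<Rightarrow> real \<Rightarrow> real \<Rightarrow> real" where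
  "radius_curvature_const \<delta>0 \<gamma>1 \<eta> LH = max (1 / \<delta>0\<^sup>2) (max (LH\<^sup>2 / (9 * \<gamma>1\<^sup>2 * (1 - \<eta>)\<^sup>2)) (1 + 2 * LH))"

definition tolerance_const :: "real \<Rightarrow> real \<Rightarrow> real" where
  "tolerance_const eg eH = max (1 / eH) (max (eH / eg\<^sup>2) (1 / eH ^ 3))"

lemma radius_curvature_const_pos: "0 \<le> LH \<Longrightarrow> 0 < radius_curvature_const \<delta>0 \<gamma>1 \<eta> LH"
  unfolding radius_curvature_const_def by (smt (verit) max.cobounded2)

lemma tolerance_const_pos: "0 < eH \<Longrightarrow> 0 < tolerance_const eg eH"
  unfolding tolerance_const_def by (smt (verit) max.cobounded1 divide_pos_pos)

lemma sq_ge_min_of_gradient_bound: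
  fixes eg eH LH \<sigma> :: real
  assumes eg: "0 < eg" and eH: "0 < eH" and "0 \<le> LH" "0 \<le> \<sigma>"
    and big: "eg < LH / 2 * \<sigma>\<^sup>2 + eH * \<sigma>"
  shows "min (eH\<^sup>2) (eg\<^sup>2 / eH\<^sup>2) \<le> (1 + 2 * LH) * \<sigma>\<^sup>2"
proof (rule ccontr)
  \<comment> \<open>otherwise \<open>u \<sigma>\<^sup>2 < eg\<close> and \<open>4 u eH \<sigma> < (3 u + 1) eg\<close>; as \<open>2 LH = u - 1\<close>, these add up to
    \<open>4 u (LH \<sigma>\<^sup>2 / 2 + eH \<sigma>) < 4 u eg\<close>\<close>
  define u where "u = 1 + 2 * LH"
  define q where "q = u * \<sigma>\<^sup>2"
  have u: "1 \<le> u" and q: "0 \<le> q"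
    using \<open>0 \<le> LH\<close> by (simp_all add: u_def q_def)
  assume "\<not> ?thesis"
  then have "q < eH\<^sup>2" and "q < eg\<^sup>2 / eH\<^sup>2"
    by (simp_all add: u_def q_def min_le_iff_disj)
  then have q_eg: "q * eH\<^sup>2 < eg\<^sup>2"
    using eH by (simp add: pos_less_divide_eq)
  then have "q\<^sup>2 < eg\<^sup>2"
    using q \<open>q < eH\<^sup>2\<close> mult_left_mono[of q "eH\<^sup>2" q] by (simp add: power2_eq_square)
  then have "q < eg"
    using eg by (simp add: power_less_imp_less_base)
  have "(4 * u * (eH * \<sigma>))\<^sup>2 = 16 * u * (q * eH\<^sup>2)"
    by (simp add: q_def power2_eq_square)
  also have "\<dots> < 16 * u * eg\<^sup>2"
    using q_eg u by simp
  also have "\<dots> \<le> ((3 * u + 1) * eg)\<^sup>2"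
  proof -
    have "0 \<le> (9 * u - 1) * (u - 1)"
      using u by simp
    then have "16 * u \<le> (3 * u + 1)\<^sup>2"
      by (simp add: power2_eq_square algebra_simps)
    then show ?thesis
      by (simp add: power_mult_distrib mult_right_mono)
  qed
  finally have "4 * u * (eH * \<sigma>) < (3 * u + 1) * eg"
    using eg u by (simp add: power_less_imp_less_base)
  moreover have "4 * u * (LH / 2 * \<sigma>\<^sup>2) = (u - 1) * q"
    by (simp add: u_def q_def algebra_simps)
  moreover have "(u - 1) * q \<le> (u - 1) * eg"
    using \<open>q < eg\<close> u by (simp add: mult_left_mono)
  ultimately have "4 * u * (LH / 2 * \<sigma>\<^sup>2 + eH * \<sigma>) < 4 * u * eg"
    by (simp add: algebra_simps)
  with big u show False
    by simp
qed

lemma one_le_scaled_sq_step: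
  fixes \<sigma> :: real
  assumes "0 < \<delta>0" "0 < \<gamma>1" "\<eta> < 1" "0 < eg" "0 < eH" "0 < LH"
    and "\<delta>0 \<le> \<sigma> \<or> 3 * \<gamma>1 * (1 - \<eta>) * eH / LH \<le> \<sigma> \<or> min (eH\<^sup>2) (eg\<^sup>2 / eH\<^sup>2) \<le> (1 + 2 * LH) * \<sigma>\<^sup>2"
  shows "1 \<le> \<sigma>\<^sup>2 * (eH * radius_curvature_const \<delta>0 \<gamma>1 \<eta> LH * tolerance_const eg eH)"
proof -
  let ?A = "radius_curvature_const \<delta>0 \<gamma>1 \<eta> LH" and ?M = "tolerance_const eg eH"
  have scale: "1 \<le> \<sigma>\<^sup>2 * (eH * ?A * ?M)"
    if "1 \<le> p * (eH * a * m)" "0 \<le> p" "p \<le> \<sigma>\<^sup>2" "0 < a" "a \<le> ?A" "0 < m" "m \<le> ?M" for p a m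
  proof -
    have "p * (eH * a * m) \<le> \<sigma>\<^sup>2 * (eH * ?A * ?M)"
      using that \<open>0 < eH\<close> by (intro mult_mono) (auto intro!: mult_mono)
    with that show ?thesis
      by linarith
  qed
  define c where "c = 3 * \<gamma>1 * (1 - \<eta>) * eH / LH"
  have "0 < c"
    using assms by (simp add: c_def)
  have u: "0 < 1 + 2 * LH"
    using assms by simp
  consider "\<delta>0 \<le> \<sigma>" | "c \<le> \<sigma>" | "eH\<^sup>2 \<le> (1 + 2 * LH) * \<sigma>\<^sup>2" | "eg\<^sup>2 / eH\<^sup>2 \<le> (1 + 2 * LH) * \<sigma>\<^sup>2"
    using assms(7) by (auto simp: c_def min_le_iff_disj)
  then show ?thesis
  proof cases
    case 1
    then show ?thesis
      using assms by (intro scale[of "\<delta>0\<^sup>2" "1 / \<delta>0\<^sup>2" "1 / eH"])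
        (auto simp: radius_curvature_const_def tolerance_const_def power_mono)
  next
    case 2
    define \<kappa> where "\<kappa> = \<gamma>1 * (1 - \<eta>)"
    have "0 < \<kappa>" and "9 * \<gamma>1\<^sup>2 * (1 - \<eta>)\<^sup>2 = 9 * \<kappa>\<^sup>2" and "c = 3 * \<kappa> * eH / LH"
      using assms by (simp_all add: \<kappa>_def c_def power_mult_distrib)
    then have "c\<^sup>2 * (eH * (LH\<^sup>2 / (9 * \<gamma>1\<^sup>2 * (1 - \<eta>)\<^sup>2)) * (1 / eH ^ 3)) = 1"
      using assms by (simp add: field_simps power2_eq_square power3_eq_cube)
    with 2 \<open>0 < c\<close> show ?thesis
      using assms by (intro scale[of "c\<^sup>2" "LH\<^sup>2 / (9 * \<gamma>1\<^sup>2 * (1 - \<eta>)\<^sup>2)" "1 / eH ^ 3"])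
        (auto simp: radius_curvature_const_def tolerance_const_def power_mono)
  next
    case 3
    then have "eH\<^sup>2 / (1 + 2 * LH) \<le> \<sigma>\<^sup>2"
      using u by (simp add: pos_divide_le_eq mult.commute)
    then show ?thesis
      using assms u by (intro scale[of "eH\<^sup>2 / (1 + 2 * LH)" "1 + 2 * LH" "1 / eH ^ 3"])
        (auto simp: radius_curvature_const_def tolerance_const_def power2_eq_square power3_eq_cube)
  next
    case 4
    then have "eg\<^sup>2 / eH\<^sup>2 / (1 + 2 * LH) \<le> \<sigma>\<^sup>2"
      using u by (simp only: pos_divide_le_eq mult.commute)
    then show ?thesis
      using assms u by (intro scale[of "eg\<^sup>2 / eH\<^sup>2 / (1 + 2 * LH)" "1 + 2 * LH" "eH / eg\<^sup>2"])
        (auto simp: radius_curvature_const_def tolerance_const_def power2_eq_square)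
  qed
qed

section \<open>Counting\<close>

lemma card_le_of_large_decrements:
  fixes a :: "nat \<Rightarrow> real" and G :: "nat set"
  assumes "0 < D"
    and mono: "\<And>k j. k \<in> G \<Longrightarrow> j \<le> k \<Longrightarrow> a (Suc j) \<le> a j"
    and "b \<le> a 0" and lower: "\<And>k. k \<in> G \<Longrightarrow> b \<le> a (Suc k)"
    and large: "\<And>k. k \<in> G \<Longrightarrow> D \<le> a k - a (Suc k)"
  shows "finite G \<and> real (card G) * D \<le> a 0 - b"
proof -
  have bound: "real (card F) * D \<le> a 0 - b" if "F \<subseteq> G" "finite F" for F
  proof (cases "F = {}")
    case False
    define N where "N = Max F"
    have "N \<in> G"
      using that Max_in[OF \<open>finite F\<close> False] by (auto simp: N_def)
    have F_le: "F \<subseteq> {..<Suc N}"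
      using \<open>finite F\<close> by (auto simp: N_def less_Suc_eq_le)
    have "real (card F) * D = (\<Sum>j\<in>F. D)"
      by simp
    also have "\<dots> \<le> (\<Sum>j\<in>F. a j - a (Suc j))"
      using that large by (intro sum_mono) auto
    also have "\<dots> \<le> (\<Sum>j<Suc N. a j - a (Suc j))"
      using mono[OF \<open>N \<in> G\<close>] F_le by (intro sum_mono2) auto
    also have "\<dots> = a 0 - a (Suc N)"
      by (rule sum_lessThan_telescope')
    also have "\<dots> \<le> a 0 - b"
      using lower[OF \<open>N \<in> G\<close>] by simp
    finally show ?thesis .
  qed (use \<open>b \<le> a 0\<close> in simp)
  have "finite G \<and> card G \<le> nat \<lfloor>(a 0 - b) / D\<rfloor>"
  proof (rule finite_if_finite_subsets_card_bdd)
    fix F assume "F \<subseteq> G" "finite F"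
    with bound \<open>0 < D\<close> have "real (card F) \<le> (a 0 - b) / D"
      by (simp add: pos_le_divide_eq)
    then show "card F \<le> nat \<lfloor>(a 0 - b) / D\<rfloor>"
      by (simp add: le_nat_floor)
  qed
  with bound show ?thesis
    by blast
qed

lemma card_le_double_of_next_in:
  fixes S G :: "nat set"
  assumes "finite G" "G \<subseteq> S"
    and next_in: "\<And>k. k \<in> S \<Longrightarrow> k \<notin> G \<Longrightarrow>
      (\<forall>j\<in>S. j \<le> k) \<or> (\<exists>k'\<in>G. k < k' \<and> (\<forall>j\<in>S. k < j \<longrightarrow> k' \<le> j))"
  shows "finite S \<and> card S \<le> 2 * card G + 1"
proof -
  define T where "T = {k \<in> S. \<forall>j\<in>S. j \<le> k}"
  define P where "P = S - G - T"
  have "\<forall>k\<in>P. \<exists>k'\<in>G. k < k' \<and> (\<forall>j\<in>S. k < j \<longrightarrow> k' \<le> j)"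
    using next_in by (auto simp: P_def T_def)
  then obtain nx where nx: "\<And>k. k \<in> P \<Longrightarrow> nx k \<in> G \<and> k < nx k \<and> (\<forall>j\<in>S. k < j \<longrightarrow> nx k \<le> j)"
    by metis
  have "inj_on nx P"
  proof (rule linorder_inj_onI')
    fix i j assume "i \<in> P" "j \<in> P" "i < j"
    then have "nx i \<le> j" and "j < nx j"
      using nx by (auto simp: P_def)
    then show "nx i \<noteq> nx j"
      by simp
  qed
  moreover have "nx ` P \<subseteq> G"
    using nx by auto
  ultimately have "finite P" and card_P: "card P \<le> card G"
    using \<open>finite G\<close> finite_imageD[OF finite_subset] card_inj_on_le by blast+
  have "finite T \<and> card T \<le> 1"
  proof (cases "T = {}")
    case False
    then obtain t where "t \<in> T"
      by blast
    then have "T \<subseteq> {t}"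
      by (auto simp: T_def intro: order.antisym)
    then show ?thesis
      using card_mono[of "{t}" T] finite_subset[of T "{t}"] by simp
  qed simp
  moreover have "S = G \<union> P \<union> T"
    using \<open>G \<subseteq> S\<close> by (auto simp: P_def T_def)
  ultimately show ?thesis
    using \<open>finite G\<close> \<open>finite P\<close> card_P card_Un_le[of "G \<union> P" T] card_Un_le[of G P] by auto
qed

section \<open>A run of the trust-region Newton method\<close>

locale tr_newton_run = lipschitz_hessian f g H U LH
  for f :: "real^'n \<Rightarrow> real" and g :: "real^'n \<Rightarrow> real^'n" and H :: "real^'n \<Rightarrow> real^'n^'n"
    and U :: "(real^'n) set" and LH :: real +
  fixes x s :: "nat \<Rightarrow> real^'n" and \<delta> :: "nat \<Rightarrow> real"
    and eg eH \<gamma>1 \<gamma>2 \<psi> \<delta>0 \<delta>max \<eta> flow :: real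
    and K S :: "nat set" and \<rho> :: "nat \<Rightarrow> real"
  assumes eg: "0 < eg" and eH: "0 < eH" and \<gamma>1: "0 < \<gamma>1" "\<gamma>1 < 1" and \<gamma>2: "1 \<le> \<gamma>2"
    and \<delta>0: "0 < \<delta>0" "\<delta>0 \<le> \<delta>max" and \<eta>: "0 < \<eta>" "\<eta> < 1" and LH_pos: "0 < LH"
    and U_open: "open U"
    and init: "\<delta> 0 = \<delta>0"
    and K_def: "K = {k. \<forall>j\<le>k. \<not> stationary g H eg eH (x j)}"
    and \<rho>_def: "\<And>k. \<rho> k = (f (x k) - f (x k + s k)) /
                    (tr_model f g H (x k) (x k) - tr_model f g H (x k) (x k + s k))"
    and S_def: "S = {k \<in> K. \<rho> k \<ge> \<eta>}"
    and step_feas: "\<And>k. k \<in> K \<Longrightarrow> norm (s k) \<le> \<delta> k"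
    and step_opt: "\<And>k t. k \<in> K \<Longrightarrow> norm t \<le> \<delta> k \<Longrightarrow>
         tr_model f g H (x k) (x k + s k) + (1/2) * eH * (norm (s k))\<^sup>2
           \<le> tr_model f g H (x k) (x k + t) + (1/2) * eH * (norm t)\<^sup>2"
    and succ: "\<And>k. k \<in> K \<Longrightarrow> \<rho> k \<ge> \<eta> \<Longrightarrow>
         x (Suc k) = x k + s k \<and>
         \<delta> (Suc k) = (if norm (s k) \<ge> \<psi> * \<delta> k then min (\<gamma>2 * \<delta> k) \<delta>max else \<delta> k)"
    and unsucc: "\<And>k. k \<in> K \<Longrightarrow> \<rho> k < \<eta> \<Longrightarrow>
         x (Suc k) = x k \<and> \<delta> (Suc k) = \<gamma>1 * norm (s k)"
    and low: "\<And>k. (\<forall>j<k. j \<in> K) \<Longrightarrow> flow \<le> f (x k)"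
    and segs: "\<And>k. k \<in> K \<Longrightarrow> closed_segment (x k) (x k + s k) \<subseteq> U"
begin

lemma K_downward_closed: "k \<in> K \<Longrightarrow> j \<le> k \<Longrightarrow> j \<in> K"
  using K_def by auto

lemma iterate_in_U: "k \<in> K \<Longrightarrow> x k \<in> U"
  using segs ends_in_segment(1) by blast

lemma hessian_symmetric_at_iterate: "k \<in> K \<Longrightarrow> u \<bullet> (H (x k) *v v) = v \<bullet> (H (x k) *v u)"
  by (rule hessian_symmetric) (simp add: U_open interior_open iterate_in_U)

lemma model_decrease:
  assumes "k \<in> K"
  shows "eH / 2 * (norm (s k))\<^sup>2 \<le> f (x k) - tr_model f g H (x k) (x k + s k)"
proof -
  have "0 \<le> \<delta> k"
    using step_feas[OF assms] norm_ge_zero order_trans by blast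
  with step_opt[OF assms, of 0] show ?thesis
    by (simp add: tr_model_def)
qed

lemma successful_step_nonzero:
  assumes "k \<in> S"
  shows "s k \<noteq> 0"
proof
  assume "s k = 0"
  then have "\<rho> k = 0"
    by (simp add: \<rho>_def)
  with assms \<eta> show False
    by (simp add: S_def)
qed

lemma successful_decrease:
  assumes "k \<in> S"
  shows "\<eta> * (eH / 2 * (norm (s k))\<^sup>2) \<le> f (x k) - f (x (Suc k))"
proof -
  have k: "k \<in> K" "\<eta> \<le> \<rho> k"
    using assms by (auto simp: S_def)
  let ?dm = "f (x k) - tr_model f g H (x k) (x k + s k)"
  have "0 < eH / 2 * (norm (s k))\<^sup>2"
    using eH successful_step_nonzero[OF assms] by simp
  with model_decrease[OF k(1)] have "0 < ?dm" and "\<eta> * (eH / 2 * (norm (s k))\<^sup>2) \<le> \<eta> * ?dm"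
    using \<eta> by simp_all
  moreover have "\<eta> * ?dm \<le> f (x k) - f (x k + s k)"
    using k(2) \<open>0 < ?dm\<close> by (simp add: \<rho>_def tr_model_def pos_le_divide_eq)
  ultimately show ?thesis
    using succ[OF k] by simp
qed

lemma f_nonincreasing:
  assumes "k \<in> K"
  shows "f (x (Suc k)) \<le> f (x k)"
proof (cases "\<eta> \<le> \<rho> k")
  case True
  with assms have "\<eta> * (eH / 2 * (norm (s k))\<^sup>2) \<le> f (x k) - f (x (Suc k))"
    by (intro successful_decrease) (simp add: S_def)
  moreover have "0 \<le> \<eta> * (eH / 2 * (norm (s k))\<^sup>2)"
    using \<eta> eH by simp
  ultimately show ?thesis
    by linarith
qed (simp add: unsucc[OF assms])

text \<open>A short step is successful because the cubic model error \<open>LH \<parallel>s\<parallel>\<^sup>3 / 6\<close> is then at most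
  \<open>1 - \<eta>\<close> times the model decrease \<open>eH \<parallel>s\<parallel>\<^sup>2 / 2\<close>.\<close>
lemma short_step_successful:
  assumes k: "k \<in> K" and "s k \<noteq> 0" and short: "norm (s k) < 3 * (1 - \<eta>) * eH / LH"
  shows "\<eta> \<le> \<rho> k"
proof -
  let ?\<sigma> = "norm (s k)" and ?dm = "f (x k) - tr_model f g H (x k) (x k + s k)"
  have "0 < ?\<sigma>"
    using \<open>s k \<noteq> 0\<close> by simp
  have "LH * ?\<sigma> < 3 * (1 - \<eta>) * eH"
    using short LH_pos by (simp add: pos_less_divide_eq mult.commute)
  have "LH * ?\<sigma> ^ 3 / 6 = (LH * ?\<sigma>) * (?\<sigma>\<^sup>2 / 6)"
    by (simp add: power2_eq_square power3_eq_cube)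
  also have "\<dots> < (3 * (1 - \<eta>) * eH) * (?\<sigma>\<^sup>2 / 6)"
    using \<open>LH * ?\<sigma> < 3 * (1 - \<eta>) * eH\<close> \<open>0 < ?\<sigma>\<close> by (intro mult_strict_right_mono) auto
  also have "\<dots> = (1 - \<eta>) * (eH / 2 * ?\<sigma>\<^sup>2)"
    by simp
  also have "\<dots> \<le> (1 - \<eta>) * ?dm"
    by (rule mult_left_mono[OF model_decrease[OF k]]) (use \<eta> in simp)
  also have "\<dots> = ?dm - \<eta> * ?dm"
    by (simp add: algebra_simps)
  finally have "\<eta> * ?dm \<le> f (x k) - f (x k + s k)"
    using model_remainder_bound[OF segs[OF k]] unfolding abs_le_iff by linarith
  moreover have "0 < ?dm"
    using model_decrease[OF k] eH \<open>0 < ?\<sigma>\<close> by (smt (verit) zero_less_power half_gt_zero mult_pos_pos)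
  ultimately show ?thesis
    by (simp add: \<rho>_def tr_model_def pos_le_divide_eq)
qed

definition radius_floor :: real where
  "radius_floor = min \<delta>0 (3 * \<gamma>1 * (1 - \<eta>) * eH / LH)"

text \<open>The radius can only drop to \<open>0\<close> after a zero trial step, and then it stays \<open>0\<close>.\<close>
lemma radius_invariant:
  "(\<forall>j<k. j \<in> K) \<Longrightarrow> 0 \<le> \<delta> k \<and> \<delta> k \<le> \<delta>max \<and> (\<delta> k = 0 \<or> radius_floor \<le> \<delta> k)"
proof (induction k)
  case 0
  then show ?case
    using init \<delta>0 by (simp add: radius_floor_def)
next
  case (Suc k)
  then have k: "k \<in> K" and IH: "0 \<le> \<delta> k \<and> \<delta> k \<le> \<delta>max \<and> (\<delta> k = 0 \<or> radius_floor \<le> \<delta> k)"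
    by auto
  show ?case
  proof (cases "\<eta> \<le> \<rho> k")
    case True
    then have "0 < norm (s k)"
      using successful_step_nonzero[of k] k by (simp add: S_def)
    then have "0 < \<delta> k"
      using step_feas[OF k] by linarith
    moreover have "\<delta> k \<le> \<delta> (Suc k) \<and> \<delta> (Suc k) \<le> \<delta>max"
      using succ[OF k True] IH \<gamma>2 \<open>0 < \<delta> k\<close> by auto
    ultimately show ?thesis
      using IH by auto
  next
    case False
    then have step: "\<delta> (Suc k) = \<gamma>1 * norm (s k)"
      using unsucc[OF k] by simp
    have "\<delta> (Suc k) \<le> \<delta> k"
      using step step_feas[OF k] \<gamma>1 mult_left_le_one_le[of "norm (s k)" \<gamma>1] by simp
    moreover have "\<delta> (Suc k) = 0 \<or> radius_floor \<le> \<delta> (Suc k)"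
    proof (cases "s k = 0")
      case False
      with short_step_successful[OF k] \<open>\<not> \<eta> \<le> \<rho> k\<close> have "3 * (1 - \<eta>) * eH / LH \<le> norm (s k)"
        by fastforce
      then have "\<gamma>1 * (3 * (1 - \<eta>) * eH / LH) \<le> \<delta> (Suc k)"
        unfolding step by (rule mult_left_mono) (use \<gamma>1 in simp)
      moreover have "radius_floor \<le> \<gamma>1 * (3 * (1 - \<eta>) * eH / LH)"
        unfolding radius_floor_def by (rule min.coboundedI2) (simp add: mult_ac)
      ultimately show ?thesis
        by simp
    qed (simp add: step)
    ultimately show ?thesis
      using IH step \<gamma>1 by simp
  qed
qed

lemma successful_radius_ge:
  assumes "k \<in> S"
  shows "radius_floor \<le> \<delta> k"
proof -
  have k: "k \<in> K"
    using assms by (simp add: S_def)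
  moreover have "0 < norm (s k)"
    using successful_step_nonzero[OF assms] by simp
  ultimately have "0 < \<delta> k"
    using step_feas[OF k] by linarith
  with radius_invariant[of k] K_downward_closed[OF k] show ?thesis
    by auto
qed

lemma interior_step_optimality:
  assumes k: "k \<in> K" and "norm (s k) < \<delta> k"
  shows "g (x k) + H (x k) *v s k + eH *\<^sub>R s k = 0"
    and "0 \<le> w \<bullet> (H (x k) *v w) + eH * (w \<bullet> w)"
proof -
  have "g (x k) \<bullet> s k + (s k \<bullet> (H (x k) *v s k)) / 2 + eH / 2 * (norm (s k))\<^sup>2
      \<le> g (x k) \<bullet> t + (t \<bullet> (H (x k) *v t)) / 2 + eH / 2 * (norm t)\<^sup>2" if "norm t \<le> \<delta> k" for t
    using step_opt[OF k that] by (simp add: tr_model_def)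
  from interior_minimizer_optimality[OF hessian_symmetric_at_iterate[OF k] assms(2) this]
  show "g (x k) + H (x k) *v s k + eH *\<^sub>R s k = 0" "0 \<le> w \<bullet> (H (x k) *v w) + eH * (w \<bullet> w)"
    by blast+
qed

lemma boundary_step_if_small_gradient:
  assumes k: "k \<in> K" and "norm (g (x k)) \<le> eg"
  shows "\<delta> k \<le> norm (s k)"
proof (rule ccontr)
  assume "\<not> ?thesis"
  then have "- eH \<le> lambda_min (H (x k))"
    using lambda_min_ge_if_shifted_psd[OF hessian_symmetric_at_iterate[OF k]] interior_step_optimality[OF k]
    by simp
  with assms show False
    by (simp add: K_def stationary_def)
qed

lemma gradient_after_interior_step:
  assumes "k \<in> S" and "norm (s k) < \<delta> k"
  shows "norm (g (x (Suc k))) \<le> LH / 2 * (norm (s k))\<^sup>2 + eH * norm (s k)"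
proof -
  have k: "k \<in> K" "\<eta> \<le> \<rho> k"
    using assms(1) by (auto simp: S_def)
  have "g (x (Suc k)) = (g (x k + s k) - g (x k) - H (x k) *v s k) - eH *\<^sub>R s k"
    using interior_step_optimality(1)[OF k(1) assms(2)] succ[OF k]
    by (simp add: algebra_simps eq_neg_iff_add_eq_0)
  then have "norm (g (x (Suc k))) \<le> norm (g (x k + s k) - g (x k) - H (x k) *v s k) + norm (eH *\<^sub>R s k)"
    by (metis norm_triangle_ineq4)
  then show ?thesis
    using gradient_remainder_bound[OF segs[OF k(1)]] eH by simp
qed

lemma S_subset_K: "S \<subseteq> K"
  by (auto simp: S_def)

definition decrease_threshold :: real where
  "decrease_threshold = \<eta> / (2 * radius_curvature_const \<delta>0 \<gamma>1 \<eta> LH * tolerance_const eg eH)"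

definition large_decrease :: "nat set" where
  "large_decrease = {k \<in> S. decrease_threshold \<le> f (x k) - f (x (Suc k))}"

lemma large_decrease_subset: "large_decrease \<subseteq> S"
  by (auto simp: large_decrease_def)

lemma large_decrease_if_scaled_step:
  assumes "k \<in> S"
    and "1 \<le> (norm (s k))\<^sup>2 * (eH * radius_curvature_const \<delta>0 \<gamma>1 \<eta> LH * tolerance_const eg eH)"
  shows "k \<in> large_decrease"
proof -
  let ?A = "radius_curvature_const \<delta>0 \<gamma>1 \<eta> LH" and ?M = "tolerance_const eg eH"
  have "0 < ?A" "0 < ?M"
    using LH_nonneg eH by (simp_all add: radius_curvature_const_pos tolerance_const_pos)
  with assms(2) have "1 / (?A * ?M) \<le> eH * (norm (s k))\<^sup>2"
    by (simp add: divide_le_eq mult_ac)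
  have "decrease_threshold = \<eta> / 2 * (1 / (?A * ?M))"
    by (simp add: decrease_threshold_def)
  also have "\<dots> \<le> \<eta> / 2 * (eH * (norm (s k))\<^sup>2)"
    by (rule mult_left_mono[OF \<open>1 / (?A * ?M) \<le> eH * (norm (s k))\<^sup>2\<close>]) (use \<eta> in simp)
  finally have "decrease_threshold \<le> \<eta> * (eH / 2 * (norm (s k))\<^sup>2)"
    by (simp add: mult_ac)
  with successful_decrease[OF assms(1)] assms(1) show ?thesis
    by (simp add: large_decrease_def)
qed

lemma boundary_step_large_decrease:
  assumes "k \<in> S" and "\<delta> k \<le> norm (s k)"
  shows "k \<in> large_decrease"
proof -
  have "radius_floor \<le> norm (s k)"
    using successful_radius_ge[OF assms(1)] assms(2) by linarith
  then have "\<delta>0 \<le> norm (s k) \<or> 3 * \<gamma>1 * (1 - \<eta>) * eH / LH \<le> norm (s k)"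
    unfolding radius_floor_def min_le_iff_disj .
  with \<delta>0(1) \<gamma>1(1) \<eta>(2) eg eH LH_pos show ?thesis
    by (intro large_decrease_if_scaled_step[OF assms(1)] one_le_scaled_sq_step) blast+
qed

lemma interior_step_large_decrease:
  assumes "k \<in> S" and "norm (s k) < \<delta> k" and "eg < norm (g (x (Suc k)))"
  shows "k \<in> large_decrease"
proof -
  have "eg < LH / 2 * (norm (s k))\<^sup>2 + eH * norm (s k)"
    using gradient_after_interior_step[OF assms(1,2)] assms(3) by linarith
  with eg eH LH_nonneg have "min (eH\<^sup>2) (eg\<^sup>2 / eH\<^sup>2) \<le> (1 + 2 * LH) * (norm (s k))\<^sup>2"
    by (intro sq_ge_min_of_gradient_bound) simp_all
  with \<delta>0(1) \<gamma>1(1) \<eta>(2) eg eH LH_pos show ?thesis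
    by (intro large_decrease_if_scaled_step[OF assms(1)] one_le_scaled_sq_step) blast+
qed

lemma iterate_constant_until_next_success:
  assumes "k' \<in> S" and next_k': "\<forall>j\<in>S. k < j \<longrightarrow> k' \<le> j"
  shows "Suc k \<le> i \<Longrightarrow> i \<le> k' \<Longrightarrow> x i = x (Suc k)"
proof (induction i rule: dec_induct)
  case (step i)
  have "i \<in> K"
    using K_downward_closed[of k' i] S_subset_K assms(1) step.prems by auto
  moreover have "i \<notin> S"
    using next_k' step.hyps step.prems by fastforce
  ultimately have "x (Suc i) = x i"
    using unsucc[of i] by (simp add: S_def)
  with step show ?case
    by simp
qed simp

lemma next_success_large_decrease:
  assumes "k \<in> S" and "k \<notin> large_decrease"
  shows "(\<forall>j\<in>S. j \<le> k) \<or> (\<exists>k'\<in>large_decrease. k < k' \<and> (\<forall>j\<in>S. k < j \<longrightarrow> k' \<le> j))"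
proof (cases "\<exists>j\<in>S. k < j")
  case True
  define k' where "k' = (LEAST j. j \<in> S \<and> k < j)"
  have k': "k' \<in> S" "k < k'"
    using LeastI_ex[OF True[unfolded Bex_def]] by (simp_all add: k'_def)
  have next_k': "\<forall>j\<in>S. k < j \<longrightarrow> k' \<le> j"
    by (simp add: k'_def Least_le)
  have "norm (s k) < \<delta> k"
  proof (rule ccontr)
    assume "\<not> norm (s k) < \<delta> k"
    with assms(1) have "k \<in> large_decrease"
      by (intro boundary_step_large_decrease) simp_all
    with assms(2) show False
      by contradiction
  qed
  have "\<not> eg < norm (g (x (Suc k)))"
  proof
    assume "eg < norm (g (x (Suc k)))"
    with assms(1) \<open>norm (s k) < \<delta> k\<close> have "k \<in> large_decrease"
      by (rule interior_step_large_decrease)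
    with assms(2) show False
      by contradiction
  qed
  moreover have "x k' = x (Suc k)"
    by (rule iterate_constant_until_next_success[OF k'(1) next_k']) (use k'(2) in simp_all)
  ultimately have "norm (g (x k')) \<le> eg"
    by simp
  moreover have "k' \<in> K"
    using k'(1) S_subset_K by blast
  ultimately have "\<delta> k' \<le> norm (s k')"
    using boundary_step_if_small_gradient by blast
  then have "k' \<in> large_decrease"
    by (rule boundary_step_large_decrease[OF k'(1)])
  with k' next_k' show ?thesis
    by blast
qed (meson not_less)

lemma large_decrease_count:
  "finite large_decrease \<and> real (card large_decrease) * decrease_threshold \<le> f (x 0) - flow"
proof (rule card_le_of_large_decrements)
  show "0 < decrease_threshold"
    using \<eta> LH_nonneg eH by (simp add: decrease_threshold_def radius_curvature_const_pos tolerance_const_pos)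
  show "f (x (Suc j)) \<le> f (x j)" if "k \<in> large_decrease" "j \<le> k" for k j
    using that large_decrease_subset S_subset_K f_nonincreasing K_downward_closed by blast
  show "flow \<le> f (x (Suc k))" if "k \<in> large_decrease" for k
    using that large_decrease_subset S_subset_K K_downward_closed by (intro low) (auto simp: less_Suc_eq_le)
  show "flow \<le> f (x 0)"
    by (rule low) simp
  show "decrease_threshold \<le> f (x k) - f (x (Suc k))" if "k \<in> large_decrease" for k
    using that by (simp add: large_decrease_def)
qed

theorem successful_iterations_bound:
  "finite S \<and> real (card S) \<le> of_int \<lfloor>4 * (f (x 0) - flow) / \<eta> *
     radius_curvature_const \<delta>0 \<gamma>1 \<eta> LH * tolerance_const eg eH\<rfloor> + 1"
proof -
  have S: "finite S \<and> card S \<le> 2 * card large_decrease + 1"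
  proof (rule card_le_double_of_next_in)
    show "finite large_decrease"
      using large_decrease_count by blast
  qed (simp_all add: large_decrease_subset next_success_large_decrease)
  have "0 < radius_curvature_const \<delta>0 \<gamma>1 \<eta> LH" "0 < tolerance_const eg eH"
    using LH_nonneg eH by (simp_all add: radius_curvature_const_pos tolerance_const_pos)
  moreover have "real (card large_decrease) * decrease_threshold \<le> f (x 0) - flow"
    using large_decrease_count by blast
  ultimately have "real (2 * card large_decrease) \<le> 4 * (f (x 0) - flow) / \<eta> *
     radius_curvature_const \<delta>0 \<gamma>1 \<eta> LH * tolerance_const eg eH"
    using \<eta> by (simp add: decrease_threshold_def field_simps)
  then have "real (2 * card large_decrease) \<le> of_int \<lfloor>4 * (f (x 0) - flow) / \<eta> *
     radius_curvature_const \<delta>0 \<gamma>1 \<eta> LH * tolerance_const eg eH\<rfloor>"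
    by (metis le_floor_iff of_int_of_nat_eq of_int_le_iff)
  with S show ?thesis
    by linarith
qed

end

theorem lemma2p4:
  fixes f :: "real^'n \<Rightarrow> real"
    and g :: "real^'n \<Rightarrow> real^'n"
    and H :: "real^'n \<Rightarrow> real^'n^'n"
    and U :: "(real^'n) set"
    and x s :: "nat \<Rightarrow> real^'n"
    and \<delta> :: "nat \<Rightarrow> real"
    and eg eH \<gamma>1 \<gamma>2 \<psi> \<delta>0 \<delta>max \<eta> flow Lg LH :: real
    and K S :: "nat set"
    and \<rho> :: "nat \<Rightarrow> real"
  assumes eg: "eg > 0" and eH: "eH > 0"
    and \<gamma>1: "0 < \<gamma>1" "\<gamma>1 < 1" and \<gamma>2: "1 \<le> \<gamma>2"
    and \<psi>: "1 / \<gamma>2 < \<psi>" "\<psi> \<le> 1"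
    and \<delta>0: "\<delta>0 > 0" and \<delta>max: "\<delta>max \<ge> \<delta>0"
    and \<eta>: "0 < \<eta>" "\<eta> < 1"
    and init: "\<delta> 0 = \<delta>0"
    and K_def: "K = {k. \<forall>j\<le>k. \<not> stationary g H eg eH (x j)}"
    and \<rho>_def: "\<And>k. \<rho> k = (f (x k) - f (x k + s k)) /
                    (tr_model f g H (x k) (x k) - tr_model f g H (x k) (x k + s k))"
    and S_def: "S = {k \<in> K. \<rho> k \<ge> \<eta>}"
    and step_feas: "\<And>k. k \<in> K \<Longrightarrow> norm (s k) \<le> \<delta> k"
    and step_opt: "\<And>k t. k \<in> K \<Longrightarrow> norm t \<le> \<delta> k \<Longrightarrow>
         tr_model f g H (x k) (x k + s k) + (1/2) * eH * (norm (s k))\<^sup>2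
           \<le> tr_model f g H (x k) (x k + t) + (1/2) * eH * (norm t)\<^sup>2"
    and succ: "\<And>k. k \<in> K \<Longrightarrow> \<rho> k \<ge> \<eta> \<Longrightarrow>
         x (Suc k) = x k + s k \<and>
         \<delta> (Suc k) = (if norm (s k) \<ge> \<psi> * \<delta> k then min (\<gamma>2 * \<delta> k) \<delta>max else \<delta> k)"
    and unsucc: "\<And>k. k \<in> K \<Longrightarrow> \<rho> k < \<eta> \<Longrightarrow>
         x (Suc k) = x k \<and> \<delta> (Suc k) = \<gamma>1 * norm (s k)"
    and low: "\<And>k. (\<forall>j<k. j \<in> K) \<Longrightarrow> flow \<le> f (x k)"
    and U_open: "open U"
    and segs: "\<And>k. k \<in> K \<Longrightarrow> closed_segment (x k) (x k + s k) \<subseteq> U"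
    and f_deriv: "\<And>y. y \<in> U \<Longrightarrow> (f has_derivative (\<lambda>h. g y \<bullet> h)) (at y)"
    and g_deriv: "\<And>y. y \<in> U \<Longrightarrow> (g has_derivative (\<lambda>h. H y *v h)) (at y)"
    and H_cont: "continuous_on U H"
    and Lg: "Lg > 0" and LH: "LH > 0"
    and g_lip: "\<And>y z. y \<in> U \<Longrightarrow> z \<in> U \<Longrightarrow> norm (g y - g z) \<le> Lg * norm (y - z)"
    and H_lip: "\<And>y z. y \<in> U \<Longrightarrow> z \<in> U \<Longrightarrow>
         onorm (\<lambda>v. (H y - H z) *v v) \<le> LH * norm (y - z)"
  shows "finite S \<and>
    real (card S) \<le>
      of_int \<lfloor>(4 * (f (x 0) - flow) / \<eta>) *
                 max (1 / \<delta>0\<^sup>2) (max (LH\<^sup>2 / (9 * \<gamma>1\<^sup>2 * (1 - \<eta>)\<^sup>2)) (1 + 2 * LH)) *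
                 max (1 / eH) (max (eH / eg\<^sup>2) (1 / eH ^ 3))\<rfloor> + 1"
proof -
  have "0 \<le> LH"
    using LH by simp
  interpret tr_newton_run f g H U LH x s \<delta> eg eH \<gamma>1 \<gamma>2 \<psi> \<delta>0 \<delta>max \<eta> flow K S \<rho>
    by unfold_locales (fact assms \<open>0 \<le> LH\<close>)+
  show ?thesis
    using successful_iterations_bound unfolding radius_curvature_const_def tolerance_const_def .
qed

end
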